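(* Let $\mathbb{X}=\{0,1\}^{\mathbb{N}}$ with the metric $d$ and let $\mu$ be the measure on $\mathbb{X}$ defined below from a family $\mathcal{L}$ of cylinders and numbers $0<p_0\le p_1$ with $p_0+p_1=1$. Let $E=\{q=(q_1,q_2)\in\mathbb{R}^2: q_1+q_2\ge0\}$, and let $\chi:\mathbb{X}\times\left]0,1\right]\to(\mathbb{R}^2)'$ satisfy: for every $q=(q_1,q_2)\in\mathbb{R}^2$ and every $\lambda>0$ there is $r_0>0$ such that for all $x\in\mathbb{X}$ and $r<r_0$, $$r^{\lambda}\mu(B(x,r))^{q_1+q_2}\le e^{\langle q,\chi(x,r)\rangle}\le r^{-\lambda}\mu(B(x,r))^{q_1+q_2}.$$ Let $a>0$ and $\alpha\in(\mathbb{R}^2)'$ with $\langle q,\alpha\rangle=a(q_1+q_2)$. Then $$\left\{x\in\mathbb{X}:\limsup_{r\to0}\frac{\langle q,\chi(x,r)\rangle}{\log r}\le\langle q,\alpha\rangle\ \forall q\in E\right\}=\left\{x\in\mathbb{X}:\limsup_{r\to0}\frac{\log\mu(B(x,r))}{\log r}\le a\right\}.$$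
   Context: For $x=(x_i)_{i\ge0},y=(y_i)_{i\ge0}\in\mathbb{X}$, $d(x,y)=0$ if $x=y$ and $d(x,y)=2^{-n}$ if $x_n\ne y_n$ and $x_i=y_i$ for $0\le i<n$. For a finite word $j=j_0\dots j_{n-1}$ over $\{0,1\}$, the cylinder is $[j]=\{jx:x\in\mathbb{X}\}$. $\mathcal{L}$ is a family of cylinders (its elements are called selected cylinders). $\mu$ is the Borel probability measure with $\mu(\mathbb{X})=1$ and, for every cylinder $[j]$ and $l\in\{0,1\}$, $\mu([jl])=p_l\,\mu([j])$ if $[j]$ contains a selected cylinder, and $\mu([jl])=\mu([j])/2$ otherwise. *)

theory Defs
  imports "HOL-Probability.Probability"
begin

text \<open>The space X = {0,1}^N is modelled as nat \<Rightarrow> bool (False = 0, True = 1).\<close>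

definition dX :: "(nat \<Rightarrow> bool) \<Rightarrow> (nat \<Rightarrow> bool) \<Rightarrow> real" where
  "dX x y = (if x = y then 0 else (1/2) ^ (LEAST n. x n \<noteq> y n))"

definition ballX :: "(nat \<Rightarrow> bool) \<Rightarrow> real \<Rightarrow> (nat \<Rightarrow> bool) set" where
  "ballX x r = {y. dX x y < r}"

definition openX :: "(nat \<Rightarrow> bool) set \<Rightarrow> bool" where
  "openX U \<longleftrightarrow> (\<forall>x\<in>U. \<exists>e>0. ballX x e \<subseteq> U)"

definition borelX :: "(nat \<Rightarrow> bool) set set" where
  "borelX = sigma_sets UNIV {U. openX U}"

definition cyl :: "bool list \<Rightarrow> (nat \<Rightarrow> bool) set" where
  "cyl j = {x. \<forall>i<length j. x i = j ! i}"

text \<open>[j] contains a selected cylinder; the family L of cylinders is given by their words.\<close>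
definition contains_selected :: "bool list set \<Rightarrow> bool list \<Rightarrow> bool" where
  "contains_selected L j \<longleftrightarrow> (\<exists>w\<in>L. cyl w \<subseteq> cyl j)"

end

theory Submission
  imports Defs
begin

text \<open>
  Taking logarithms in the two-sided bound on exp <q, chi(x,r)> and dividing by log r shows
  that <q, chi(x,r)> / log r differs from (q1 + q2) log mu(B(x,r)) / log r by at most any
  given lambda > 0 for small r. Asymptotically close functions have the same upper bounds for
  their upper limits, and the upper limit of a multiple by q1 + q2 >= 0 is that multiple of
  the upper limit. Hence the condition for all q in E reduces to the single case q = (1,0).
\<close>

lemma Limsup_le_ereal_iff:
  fixes g :: "'a \<Rightarrow> real"
  shows "Limsup F (\<lambda>x. ereal (g x)) \<le> ereal c \<longleftrightarrow> (\<forall>e>0. eventually (\<lambda>x. g x \<le> c + e) F)"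
proof
  assume le: "Limsup F (\<lambda>x. ereal (g x)) \<le> ereal c"
  show "\<forall>e>0. eventually (\<lambda>x. g x \<le> c + e) F"
  proof (intro allI impI)
    fix e :: real assume "e > 0"
    with le have "Limsup F (\<lambda>x. ereal (g x)) < ereal (c + e)"
      by (simp add: le_less_trans)
    from Limsup_lessD[OF this] show "eventually (\<lambda>x. g x \<le> c + e) F"
      by (rule eventually_mono) simp
  qed
next
  assume ev: "\<forall>e>0. eventually (\<lambda>x. g x \<le> c + e) F"
  show "Limsup F (\<lambda>x. ereal (g x)) \<le> ereal c"
  proof (rule ereal_le_epsilon2)
    fix e :: real assume "e > 0"
    with ev have "eventually (\<lambda>x. ereal (g x) \<le> ereal c + ereal e) F"
      by (auto elim: eventually_mono)
    then show "Limsup F (\<lambda>x. ereal (g x)) \<le> ereal c + ereal e"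
      by (rule Limsup_bounded)
  qed
qed

lemma Limsup_le_ereal_iff_of_close:
  fixes g h :: "'a \<Rightarrow> real"
  assumes close: "\<And>lam. lam > 0 \<Longrightarrow> eventually (\<lambda>x. \<bar>g x - h x\<bar> \<le> lam) F"
  shows "Limsup F (\<lambda>x. ereal (g x)) \<le> ereal c \<longleftrightarrow> Limsup F (\<lambda>x. ereal (h x)) \<le> ereal c"
proof -
  have transfer: "eventually (\<lambda>x. u x \<le> c + e) F"
    if "\<forall>e>0. eventually (\<lambda>x. v x \<le> c + e) F" "e > 0"
      and "eventually (\<lambda>x. \<bar>u x - v x\<bar> \<le> e / 2) F"
    for u v :: "'a \<Rightarrow> real" and e
  proof -
    have "eventually (\<lambda>x. v x \<le> c + e / 2) F"
      using that(1,2) by simp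
    with that(3) show ?thesis
      by eventually_elim linarith
  qed
  have close': "eventually (\<lambda>x. \<bar>h x - g x\<bar> \<le> lam) F" if "lam > 0" for lam
    using close[OF that] by (simp add: abs_minus_commute)
  show ?thesis
    unfolding Limsup_le_ereal_iff using transfer close close' by (meson half_gt_zero)
qed

lemma log_ratio_close_of_powr_bounds:
  fixes r lam m s c :: real
  assumes r: "0 < r" "r < 1" and "m \<ge> 0"
    and lower: "r powr lam * m powr s \<le> exp c"
    and upper: "exp c \<le> r powr (-lam) * m powr s"
  shows "\<bar>c / ln r - s * (ln m / ln r)\<bar> \<le> lam"
proof -
  have "m powr s > 0"
    using upper by (smt (verit) exp_gt_zero mult_nonneg_nonpos powr_ge_zero)
  with \<open>m \<ge> 0\<close> have "m > 0"
    by (metis less_eq_real_def powr_0 less_irrefl)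
  have "ln (r powr lam * m powr s) \<le> ln (exp c)"
    using lower \<open>m powr s > 0\<close> r by (subst ln_le_cancel_iff) auto
  then have "lam * ln r + s * ln m \<le> c"
    using \<open>m > 0\<close> r by (simp add: ln_mult ln_powr)
  moreover have "ln (exp c) \<le> ln (r powr (-lam) * m powr s)"
    using upper \<open>m powr s > 0\<close> r by (subst ln_le_cancel_iff) auto
  then have "c \<le> - lam * ln r + s * ln m"
    using \<open>m > 0\<close> r by (simp add: ln_mult ln_powr)
  moreover have "ln r < 0"
    using r by simp
  ultimately show ?thesis
    by (simp add: abs_le_iff field_simps)
qed

theorem proposition3:
  fixes L :: "bool list set" and p0 p1 :: real and M :: "(nat \<Rightarrow> bool) measure"
    and chi :: "(nat \<Rightarrow> bool) \<Rightarrow> real \<Rightarrow> (real \<times> real \<Rightarrow> real)"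
    and a :: real and \<alpha> :: "real \<times> real \<Rightarrow> real"
  assumes p: "0 < p0" "p0 \<le> p1" "p0 + p1 = 1"
    and M_prob: "prob_space M" and M_space: "space M = UNIV" and M_sets: "sets M = borelX"
    and M_cyl: "\<And>j l. measure M (cyl (j @ [l])) =
        (if contains_selected L j then (if l then p1 else p0) * measure M (cyl j)
         else measure M (cyl j) / 2)"
    and chi_lin: "\<And>x r. 0 < r \<Longrightarrow> r \<le> 1 \<Longrightarrow> linear (chi x r)"
    and chi_bound: "\<And>q lam. lam > 0 \<Longrightarrow> \<exists>r0>0. \<forall>x r. 0 < r \<and> r \<le> 1 \<and> r < r0 \<longrightarrow>
        r powr lam * measure M (ballX x r) powr (fst q + snd q) \<le> exp (chi x r q) \<and>
        exp (chi x r q) \<le> r powr (-lam) * measure M (ballX x r) powr (fst q + snd q)"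
    and a_pos: "a > 0"
    and \<alpha>_lin: "linear \<alpha>" and \<alpha>_def: "\<And>q. \<alpha> q = a * (fst q + snd q)"
  shows "{x. \<forall>q\<in>{q :: real \<times> real. fst q + snd q \<ge> 0}.
            Limsup (at_right 0) (\<lambda>r. ereal (chi x r q / ln r)) \<le> ereal (\<alpha> q)}
       = {x. Limsup (at_right 0) (\<lambda>r. ereal (ln (measure M (ballX x r)) / ln r)) \<le> ereal a}"
proof -
  define f where "f x r = ln (measure M (ballX x r)) / ln r" for x r
  have close: "eventually (\<lambda>r. \<bar>chi x r q / ln r - (fst q + snd q) * f x r\<bar> \<le> lam) (at_right 0)"
    if lam: "lam > 0" for x q lam
  proof -
    obtain r0 where "r0 > 0" and r0: "\<forall>x r. 0 < r \<and> r \<le> 1 \<and> r < r0 \<longrightarrow>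
        r powr lam * measure M (ballX x r) powr (fst q + snd q) \<le> exp (chi x r q) \<and>
        exp (chi x r q) \<le> r powr (-lam) * measure M (ballX x r) powr (fst q + snd q)"
      using chi_bound[OF lam] by blast
    show ?thesis
      unfolding eventually_at_right_field f_def
      using \<open>r0 > 0\<close> r0 log_ratio_close_of_powr_bounds
      by (intro exI[of _ "min r0 1"]) auto
  qed
  have equiv: "Limsup (at_right 0) (\<lambda>r. ereal (chi x r q / ln r)) \<le> ereal (\<alpha> q) \<longleftrightarrow>
      ereal (fst q + snd q) * Limsup (at_right 0) (\<lambda>r. ereal (f x r)) \<le> ereal (\<alpha> q)"
    if "fst q + snd q \<ge> 0" for x q
    using Limsup_le_ereal_iff_of_close[OF close] that
    by (simp add: Limsup_ereal_mult_left[symmetric])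
  show ?thesis
  proof (intro set_eqI iffI; simp only: mem_Collect_eq f_def[symmetric])
    fix x
    assume "\<forall>q\<in>{q. fst q + snd q \<ge> 0}.
        Limsup (at_right 0) (\<lambda>r. ereal (chi x r q / ln r)) \<le> ereal (\<alpha> q)"
    then have "Limsup (at_right 0) (\<lambda>r. ereal (chi x r (1, 0) / ln r)) \<le> ereal (\<alpha> (1, 0))"
      by simp
    then show "Limsup (at_right 0) (\<lambda>r. ereal (f x r)) \<le> ereal a"
      using equiv[of "(1, 0)" x] \<alpha>_def[of "(1, 0)"] by simp
  next
    fix x
    assume "Limsup (at_right 0) (\<lambda>r. ereal (f x r)) \<le> ereal a"
    then show "\<forall>q\<in>{q. fst q + snd q \<ge> 0}.
        Limsup (at_right 0) (\<lambda>r. ereal (chi x r q / ln r)) \<le> ereal (\<alpha> q)"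
    proof (intro ballI)
      fix q :: "real \<times> real"
      assume "q \<in> {q. fst q + snd q \<ge> 0}"
      then have "fst q + snd q \<ge> 0" by simp
      with \<open>Limsup (at_right 0) (\<lambda>r. ereal (f x r)) \<le> ereal a\<close>
      have "ereal (fst q + snd q) * Limsup (at_right 0) (\<lambda>r. ereal (f x r))
          \<le> ereal (fst q + snd q) * ereal a"
        by (intro ereal_mult_left_mono) auto
      then show "Limsup (at_right 0) (\<lambda>r. ereal (chi x r q / ln r)) \<le> ereal (\<alpha> q)"
        using equiv \<open>fst q + snd q \<ge> 0\<close> by (simp add: \<alpha>_def mult.commute)
    qed
  qed
qed

end
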